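(* Let $A=kQ/I$ be a nondegenerate dimer algebra on a torus with center $Z$, and let $\psi:A\to A'$ be a cyclic contraction. If $A$ is a finitely generated $Z$-module, then $S$ is a finitely generated $R$-module.
   Context: Let $k$ be an algebraically closed field. A dimer quiver is a finite quiver $Q$ (vertices $Q_0$, arrows $Q_1$, head/tail $\operatorname{h},\operatorname{t}$) whose underlying graph embeds in a real two-torus so that each connected component of the complement is simply connected and bounded by an oriented cycle (a unit cycle). The dimer algebra is $A=kQ/I$, $I$ generated by all $p-q$ with $p,q$ paths such that for some arrow $a$ both $pa$ and $qa$ are unit cycles. Perfect matching: $D\subseteq Q_1$ meeting each unit cycle in exactly one arrow; nondegenerate: every arrow in some perfect matching. Simple matching: perfect matching $D$ such that the subquiver with arrows $Q_1\setminus D$ contains a cycle through every vertex. Cancellative: no paths $p\neq q$ of $A$ and path $r$ with $rp=rq\neq0$ or $pr=qr\neq0$. For a dimer algebra $A'=kQ'/I'$ with simple matchings $\mathcal{S}'$, $\tau:A'\to M_{|Q'_0|}(k[x_D:D\in\mathcal{S}'])$ is the algebra map with $\tau(e_i)=E_{ii}$, $\tau(a)=\big(\prod_{D\in\mathcal{S}',a\in D}x_D\big)E_{\operatorname{h}(a),\operatorname{t}(a)}$; $\bar\tau(p)$ is given by $\tau(p)=\bar\tau(p)E_{ji}$ for $p\in e_jA'e_i$, extended $k$-linearly. A contraction $\psi:A\to A'$: $A'=kQ'/I'$ is a dimer algebra with $Q'$ obtained from $Q$ by contracting a set of arrows $Q_1^*\subseteq Q_1$ to vertices, the induced map $kQ\to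 kQ'$ sending $I$ into $I'$ and inducing $\psi$. It is cyclic if $A'$ is cancellative and $S:=k[\cup_{i\in Q_0}\bar\tau\psi(e_iAe_i)]=k[\cup_{i\in Q'_0}\bar\tau(e_iA'e_i)]$. $R:=k[\cap_{i\in Q_0}\bar\tau\psi(e_iAe_i)]$ (isomorphic to the center of the homotopy algebra of $A$). *)

theory Defs
  imports Main "HOL-Library.Poly_Mapping" "HOL-Computational_Algebra.Polynomial"
begin

definition alg_closed_field :: "'k::field itself \<Rightarrow> bool" where
  "alg_closed_field _ \<longleftrightarrow> (\<forall>p :: 'k poly. degree p \<noteq> 0 \<longrightarrow> (\<exists>x. poly p x = 0))"

text \<open>A quiver is given by a vertex set V, an arrow set E, head h and tail t.
  A path is a pair (start vertex, list of arrows in order of traversal);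
  trivial paths (s, []) are the idempotents e_s.\<close>

type_synonym ('v, 'a) path = "'v \<times> 'a list"

definition valid_path :: "'v set \<Rightarrow> 'a set \<Rightarrow> ('a \<Rightarrow> 'v) \<Rightarrow> ('a \<Rightarrow> 'v) \<Rightarrow> ('v, 'a) path \<Rightarrow> bool" where
  "valid_path V E h t p \<longleftrightarrow>
     fst p \<in> V \<and> set (snd p) \<subseteq> E \<and>
     (snd p \<noteq> [] \<longrightarrow> t (hd (snd p)) = fst p) \<and>
     (\<forall>i. Suc i < length (snd p) \<longrightarrow> t (snd p ! Suc i) = h (snd p ! i))"

definition pend :: "('a \<Rightarrow> 'v) \<Rightarrow> ('v, 'a) path \<Rightarrow> 'v" where
  "pend h p = (if snd p = [] then fst p else h (last (snd p)))"

text \<open>Composition p q of paths: first q, then p (right-to-left, as for tau).\<close>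
definition pcomp :: "('v, 'a) path \<Rightarrow> ('v, 'a) path \<Rightarrow> ('v, 'a) path" where
  "pcomp p q = (fst q, snd q @ snd p)"

definition path_vertices :: "('a \<Rightarrow> 'v) \<Rightarrow> ('v, 'a) path \<Rightarrow> 'v set" where
  "path_vertices h p = insert (fst p) (h ` set (snd p))"

definition pathalg :: "'v set \<Rightarrow> 'a set \<Rightarrow> ('a \<Rightarrow> 'v) \<Rightarrow> ('a \<Rightarrow> 'v) \<Rightarrow>
    'k itself \<Rightarrow> (('v, 'a) path \<Rightarrow>\<^sub>0 'k::field) set" where
  "pathalg V E h t _ = {x. \<forall>p\<in>Poly_Mapping.keys x. valid_path V E h t p}"

definition pa_mult :: "('a \<Rightarrow> 'v) \<Rightarrow> (('v, 'a) path \<Rightarrow>\<^sub>0 'k::field)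
    \<Rightarrow> (('v, 'a) path \<Rightarrow>\<^sub>0 'k) \<Rightarrow> (('v, 'a) path \<Rightarrow>\<^sub>0 'k)" where
  "pa_mult h x y =
     (\<Sum>p\<in>Poly_Mapping.keys x. \<Sum>q\<in>Poly_Mapping.keys y.
        if pend h q = fst p
        then Poly_Mapping.single (pcomp p q) (Poly_Mapping.lookup x p * Poly_Mapping.lookup y q)
        else 0)"

definition corner_elems :: "'v set \<Rightarrow> 'a set \<Rightarrow> ('a \<Rightarrow> 'v) \<Rightarrow> ('a \<Rightarrow> 'v) \<Rightarrow>
    'k itself \<Rightarrow> 'v \<Rightarrow> (('v, 'a) path \<Rightarrow>\<^sub>0 'k::field) set" where
  "corner_elems V E h t K i =
     {x \<in> pathalg V E h t K. \<forall>p\<in>Poly_Mapping.keys x. fst p = i \<and> pend h p = i}"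

text \<open>F is the set of unit cycles (boundaries of the faces), each given as the
  list of its arrows in order of traversal (starting at an arbitrary arrow).\<close>

definition und_edges :: "'a set \<Rightarrow> ('a \<Rightarrow> 'v) \<Rightarrow> ('a \<Rightarrow> 'v) \<Rightarrow> ('v \<times> 'v) set" where
  "und_edges E h t = {(t a, h a) | a. a \<in> E} \<union> {(h a, t a) | a. a \<in> E}"

text \<open>Darts at a vertex v: (a, True) for arrows with head v, (a, False) for arrows
  with tail v. A corner of a face joins the head-dart of an arrow with the
  tail-dart of the next arrow in the face.\<close>
definition darts :: "'a set \<Rightarrow> ('a \<Rightarrow> 'v) \<Rightarrow> ('a \<Rightarrow> 'v) \<Rightarrow> 'v \<Rightarrow> ('a \<times> bool) set" where
  "darts E h t v = {(a, True) | a. a \<in> E \<and> h a = v} \<union> {(a, False) | a. a \<in> E \<and> t a = v}"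

definition corners :: "'a list set \<Rightarrow> (('a \<times> bool) \<times> ('a \<times> bool)) set" where
  "corners F =
     {((f ! i, True), (f ! ((i + 1) mod length f), False)) | f i. f \<in> F \<and> i < length f}
   \<union> {((f ! ((i + 1) mod length f), False), (f ! i, True)) | f i. f \<in> F \<and> i < length f}"

definition dimer_quiver :: "'v set \<Rightarrow> 'a set \<Rightarrow> ('a \<Rightarrow> 'v) \<Rightarrow> ('a \<Rightarrow> 'v) \<Rightarrow> 'a list set \<Rightarrow> bool" where
  "dimer_quiver V E h t F \<longleftrightarrow>
     finite V \<and> finite E \<and> V \<noteq> {} \<and> (\<forall>a\<in>E. h a \<in> V \<and> t a \<in> V) \<and> finite F \<and>
     (\<forall>f\<in>F. f \<noteq> [] \<and> set f \<subseteq> E \<and> distinct f \<and>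
        (\<forall>i<length f. t (f ! ((i + 1) mod length f)) = h (f ! i))) \<and>
     (\<exists>Fp Fm. F = Fp \<union> Fm \<and> Fp \<inter> Fm = {} \<and>
        (\<forall>a\<in>E. (\<exists>!f. f \<in> Fp \<and> a \<in> set f) \<and> (\<exists>!f. f \<in> Fm \<and> a \<in> set f))) \<and>
     (\<forall>u\<in>V. \<forall>w\<in>V. (u, w) \<in> (und_edges E h t)\<^sup>*) \<and>
     (\<forall>v\<in>V. darts E h t v \<noteq> {} \<and>
        (\<forall>d1\<in>darts E h t v. \<forall>d2\<in>darts E h t v. (d1, d2) \<in> (corners F)\<^sup>*)) \<and>
     int (card V) - int (card E) + int (card F) = 0"

definition unit_cycle :: "'a list set \<Rightarrow> ('a \<Rightarrow> 'v) \<Rightarrow> ('v, 'a) path \<Rightarrow> bool" where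
  "unit_cycle F t p \<longleftrightarrow> snd p \<noteq> [] \<and> fst p = t (hd (snd p)) \<and>
     (\<exists>f\<in>F. \<exists>n. snd p = rotate n f)"

definition dimer_rel :: "'v set \<Rightarrow> 'a set \<Rightarrow> ('a \<Rightarrow> 'v) \<Rightarrow> ('a \<Rightarrow> 'v) \<Rightarrow> 'a list set \<Rightarrow>
    (('v, 'a) path \<times> ('v, 'a) path) set" where
  "dimer_rel V E h t F =
     {(p, q). \<exists>a\<in>E. valid_path V E h t p \<and> valid_path V E h t q \<and>
        fst p = h a \<and> fst q = h a \<and>
        unit_cycle F t (pcomp p (t a, [a])) \<and> unit_cycle F t (pcomp q (t a, [a]))}"

inductive_set dimer_ideal :: "'v set \<Rightarrow> 'a set \<Rightarrow> ('a \<Rightarrow> 'v) \<Rightarrow> ('a \<Rightarrow> 'v) \<Rightarrow> 'a list set \<Rightarrow>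
    'k itself \<Rightarrow> (('v, 'a) path \<Rightarrow>\<^sub>0 'k::field) set"
  for V E h t F K where
  zero: "0 \<in> dimer_ideal V E h t F K"
| gen: "(p, q) \<in> dimer_rel V E h t F \<Longrightarrow>
     Poly_Mapping.single p 1 - Poly_Mapping.single q 1 \<in> dimer_ideal V E h t F K"
| add: "x \<in> dimer_ideal V E h t F K \<Longrightarrow> y \<in> dimer_ideal V E h t F K \<Longrightarrow>
     x + y \<in> dimer_ideal V E h t F K"
| lmult: "x \<in> dimer_ideal V E h t F K \<Longrightarrow> valid_path V E h t u \<Longrightarrow>
     pa_mult h (Poly_Mapping.single u c) x \<in> dimer_ideal V E h t F K"
| rmult: "x \<in> dimer_ideal V E h t F K \<Longrightarrow> valid_path V E h t u \<Longrightarrow>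
     pa_mult h x (Poly_Mapping.single u c) \<in> dimer_ideal V E h t F K"

text \<open>Center Z of A, as the set of representatives in kQ.\<close>
definition dimer_center :: "'v set \<Rightarrow> 'a set \<Rightarrow> ('a \<Rightarrow> 'v) \<Rightarrow> ('a \<Rightarrow> 'v) \<Rightarrow> 'a list set \<Rightarrow>
    'k itself \<Rightarrow> (('v, 'a) path \<Rightarrow>\<^sub>0 'k::field) set" where
  "dimer_center V E h t F K =
     {z \<in> pathalg V E h t K. \<forall>x\<in>pathalg V E h t K.
        pa_mult h z x - pa_mult h x z \<in> dimer_ideal V E h t F K}"

definition fg_over_center :: "'v set \<Rightarrow> 'a set \<Rightarrow> ('a \<Rightarrow> 'v) \<Rightarrow> ('a \<Rightarrow> 'v) \<Rightarrow> 'a list set \<Rightarrow>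
    'k::field itself \<Rightarrow> bool" where
  "fg_over_center V E h t F K \<longleftrightarrow>
     (\<exists>B. finite B \<and> B \<subseteq> pathalg V E h t K \<and>
        (\<forall>x\<in>pathalg V E h t K. \<exists>c. (\<forall>b\<in>B. c b \<in> dimer_center V E h t F K) \<and>
           x - (\<Sum>b\<in>B. pa_mult h (c b) b) \<in> dimer_ideal V E h t F K))"

definition cancellative :: "'v set \<Rightarrow> 'a set \<Rightarrow> ('a \<Rightarrow> 'v) \<Rightarrow> ('a \<Rightarrow> 'v) \<Rightarrow> 'a list set \<Rightarrow>
    'k::field itself \<Rightarrow> bool" where
  "cancellative V E h t F K \<longleftrightarrow>
     \<not> (\<exists>p q r. valid_path V E h t p \<and> valid_path V E h t q \<and> valid_path V E h t r \<and>
        Poly_Mapping.single p (1::'k) - Poly_Mapping.single q 1 \<notin> dimer_ideal V E h t F K \<and>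
        ((pa_mult h (Poly_Mapping.single r 1) (Poly_Mapping.single p 1)
            - pa_mult h (Poly_Mapping.single r 1) (Poly_Mapping.single q 1) \<in> dimer_ideal V E h t F K \<and>
          pa_mult h (Poly_Mapping.single r 1) (Poly_Mapping.single p 1) \<notin> dimer_ideal V E h t F K)
        \<or>
         (pa_mult h (Poly_Mapping.single p 1) (Poly_Mapping.single r 1)
            - pa_mult h (Poly_Mapping.single q 1) (Poly_Mapping.single r 1) \<in> dimer_ideal V E h t F K \<and>
          pa_mult h (Poly_Mapping.single p 1) (Poly_Mapping.single r 1) \<notin> dimer_ideal V E h t F K)))"

definition perfect_matching :: "'a set \<Rightarrow> 'a list set \<Rightarrow> 'a set \<Rightarrow> bool" where
  "perfect_matching E F D \<longleftrightarrow> D \<subseteq> E \<and> (\<forall>f\<in>F. card (D \<inter> set f) = 1)"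

definition nondegenerate :: "'a set \<Rightarrow> 'a list set \<Rightarrow> bool" where
  "nondegenerate E F \<longleftrightarrow> (\<forall>a\<in>E. \<exists>D. perfect_matching E F D \<and> a \<in> D)"

definition simple_matching :: "'v set \<Rightarrow> 'a set \<Rightarrow> ('a \<Rightarrow> 'v) \<Rightarrow> ('a \<Rightarrow> 'v) \<Rightarrow> 'a list set \<Rightarrow>
    'a set \<Rightarrow> bool" where
  "simple_matching V E h t F D \<longleftrightarrow> perfect_matching E F D \<and>
     (\<exists>c. valid_path V (E - D) h t c \<and> snd c \<noteq> [] \<and> pend h c = fst c \<and>
        V \<subseteq> path_vertices h c)"

definition simple_matchings :: "'v set \<Rightarrow> 'a set \<Rightarrow> ('a \<Rightarrow> 'v) \<Rightarrow> ('a \<Rightarrow> 'v) \<Rightarrow> 'a list set \<Rightarrow>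
    'a set set" where
  "simple_matchings V E h t F = {D. simple_matching V E h t F D}"

text \<open>Polynomials in variables x_D (D a set of arrows) are poly_mappings from
  exponent vectors (poly_mappings from arrow sets to nat) to k.
  The exponent vector of a path p is that of the monomial
  prod over arrows a of p of prod_{D \<in> SM, a \<in> D} x_D.\<close>
definition tau_exp :: "'a set set \<Rightarrow> ('v, 'a) path \<Rightarrow> ('a set \<Rightarrow>\<^sub>0 nat)" where
  "tau_exp SM p =
     sum_list (map (\<lambda>a. \<Sum>D\<in>{D \<in> SM. a \<in> D}. Poly_Mapping.single D (1::nat)) (snd p))"

definition tau_bar :: "'a set set \<Rightarrow> (('v, 'a) path \<Rightarrow>\<^sub>0 'k::field)
    \<Rightarrow> (('a set \<Rightarrow>\<^sub>0 nat) \<Rightarrow>\<^sub>0 'k)" where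
  "tau_bar SM x = (\<Sum>p\<in>Poly_Mapping.keys x. Poly_Mapping.single (tau_exp SM p) (Poly_Mapping.lookup x p))"

definition contr_rel :: "'a set \<Rightarrow> ('a \<Rightarrow> 'v) \<Rightarrow> ('a \<Rightarrow> 'v) \<Rightarrow> ('v \<times> 'v) set" where
  "contr_rel Qs h t = {(h a, t a) | a. a \<in> Qs} \<union> {(t a, h a) | a. a \<in> Qs}"

definition is_contraction :: "'v set \<Rightarrow> 'a set \<Rightarrow> ('a \<Rightarrow> 'v) \<Rightarrow> ('a \<Rightarrow> 'v) \<Rightarrow>
    'w set \<Rightarrow> 'a set \<Rightarrow> ('a \<Rightarrow> 'w) \<Rightarrow> ('a \<Rightarrow> 'w) \<Rightarrow> ('v \<Rightarrow> 'w) \<Rightarrow> 'a set \<Rightarrow> bool" where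
  "is_contraction V E h t V' E' h' t' \<pi> Qs \<longleftrightarrow>
     Qs \<subseteq> E \<and> E' = E - Qs \<and> \<pi> ` V = V' \<and>
     (\<forall>a\<in>E'. h' a = \<pi> (h a) \<and> t' a = \<pi> (t a)) \<and>
     (\<forall>i\<in>V. \<forall>j\<in>V. \<pi> i = \<pi> j \<longleftrightarrow> (i, j) \<in> (contr_rel Qs h t)\<^sup>*)"

text \<open>The induced map kQ \<rightarrow> kQ': vertices go to their images, contracted arrows
  to the corresponding vertex idempotents, other arrows to themselves.\<close>
definition contr_path :: "('v \<Rightarrow> 'w) \<Rightarrow> 'a set \<Rightarrow> ('v, 'a) path \<Rightarrow> ('w, 'a) path" where
  "contr_path \<pi> Qs p = (\<pi> (fst p), filter (\<lambda>a. a \<notin> Qs) (snd p))"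

definition contr_map :: "('v \<Rightarrow> 'w) \<Rightarrow> 'a set \<Rightarrow> (('v, 'a) path \<Rightarrow>\<^sub>0 'k::field)
    \<Rightarrow> (('w, 'a) path \<Rightarrow>\<^sub>0 'k)" where
  "contr_map \<pi> Qs x =
     (\<Sum>p\<in>Poly_Mapping.keys x. Poly_Mapping.single (contr_path \<pi> Qs p) (Poly_Mapping.lookup x p))"

inductive_set k_subalg :: "(('d \<Rightarrow>\<^sub>0 nat) \<Rightarrow>\<^sub>0 'k::field) set \<Rightarrow> (('d \<Rightarrow>\<^sub>0 nat) \<Rightarrow>\<^sub>0 'k) set"
  for G where
  const: "Poly_Mapping.single 0 c \<in> k_subalg G"
| gen: "g \<in> G \<Longrightarrow> g \<in> k_subalg G"
| add: "x \<in> k_subalg G \<Longrightarrow> y \<in> k_subalg G \<Longrightarrow> x + y \<in> k_subalg G"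
| mult: "x \<in> k_subalg G \<Longrightarrow> y \<in> k_subalg G \<Longrightarrow> x * y \<in> k_subalg G"

definition taupsi_corner :: "'v set \<Rightarrow> 'a set \<Rightarrow> ('a \<Rightarrow> 'v) \<Rightarrow> ('a \<Rightarrow> 'v) \<Rightarrow>
    'w set \<Rightarrow> 'a set \<Rightarrow> ('a \<Rightarrow> 'w) \<Rightarrow> ('a \<Rightarrow> 'w) \<Rightarrow> 'a list set \<Rightarrow>
    ('v \<Rightarrow> 'w) \<Rightarrow> 'a set \<Rightarrow> 'k::field itself \<Rightarrow> 'v \<Rightarrow> (('a set \<Rightarrow>\<^sub>0 nat) \<Rightarrow>\<^sub>0 'k) set" where
  "taupsi_corner V E h t V' E' h' t' F' \<pi> Qs K i =
     (\<lambda>x. tau_bar (simple_matchings V' E' h' t' F') (contr_map \<pi> Qs x)) ` corner_elems V E h t K i"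

definition S_ring where
  "S_ring V E h t V' E' h' t' F' \<pi> Qs K =
     k_subalg (\<Union>i\<in>V. taupsi_corner V E h t V' E' h' t' F' \<pi> Qs K i)"

definition R_ring where
  "R_ring V E h t V' E' h' t' F' \<pi> Qs K =
     k_subalg (\<Inter>i\<in>V. taupsi_corner V E h t V' E' h' t' F' \<pi> Qs K i)"

definition cyclic_contraction :: "'v set \<Rightarrow> 'a set \<Rightarrow> ('a \<Rightarrow> 'v) \<Rightarrow> ('a \<Rightarrow> 'v) \<Rightarrow> 'a list set \<Rightarrow>
    'w set \<Rightarrow> 'a set \<Rightarrow> ('a \<Rightarrow> 'w) \<Rightarrow> ('a \<Rightarrow> 'w) \<Rightarrow> 'a list set \<Rightarrow>
    ('v \<Rightarrow> 'w) \<Rightarrow> 'a set \<Rightarrow> 'k::field itself \<Rightarrow> bool" where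
  "cyclic_contraction V E h t F V' E' h' t' F' \<pi> Qs K \<longleftrightarrow>
     dimer_quiver V' E' h' t' F' \<and>
     is_contraction V E h t V' E' h' t' \<pi> Qs \<and>
     contr_map \<pi> Qs ` dimer_ideal V E h t F K \<subseteq> dimer_ideal V' E' h' t' F' K \<and>
     cancellative V' E' h' t' F' K \<and>
     S_ring V E h t V' E' h' t' F' \<pi> Qs K =
       k_subalg (\<Union>j\<in>V'. tau_bar (simple_matchings V' E' h' t' F') ` corner_elems V' E' h' t' K j)"

definition fg_module :: "('b::comm_ring_1) set \<Rightarrow> 'b set \<Rightarrow> bool" where
  "fg_module R M \<longleftrightarrow>
     (\<exists>B. finite B \<and> B \<subseteq> M \<and> (\<forall>s\<in>M. \<exists>c. (\<forall>b\<in>B. c b \<in> R) \<and> s = (\<Sum>b\<in>B. c b * b)))"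

end

theory Submission
  imports Defs "HOL-Library.FuncSet"
begin

text \<open>
  Applying \<tau>-bar after the contraction \<psi> sends every path p of Q to a monomial x^(g p),
  where g is additive under concatenation. Extend g linearly block by block: the (s, e)-block
  map sends the paths from s to e to their monomials and all other paths to 0. The two paths
  of a relation of A' complete the same arrow to unit cycles, and a unit cycle meets every
  perfect matching exactly once, so the block maps vanish on I' and, as \<psi>(I) \<subseteq> I', on I.

  Commuting a central element c with the vertex idempotents and with the arrows shows that the
  image of c is block diagonal and, since monomials are not zero divisors and Q is connected,
  has the same diagonal entry at every vertex. That entry lies in every corner image
  T_i = \<tau>\<psi>(e_i A e_i), hence in R. So if B is a finite set of generators of A over Z, each
  T_i is spanned over R by the images of the e_i b e_i with b \<in> B. The products over all
  vertices of one such generator per vertex then span S = k[\<Union> T_i] over R: multiplying such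
  a product by an element of T_i changes only its i-th factor, which stays in T_i.
\<close>

section \<open>Linear extension along supports\<close>

definition pm_sum :: "('p \<Rightarrow> 'k::zero \<Rightarrow> 'r::comm_monoid_add) \<Rightarrow> ('p \<Rightarrow>\<^sub>0 'k) \<Rightarrow> 'r" where
  "pm_sum f x = (\<Sum>p\<in>Poly_Mapping.keys x. f p (Poly_Mapping.lookup x p))"

definition coeff_additive :: "('p \<Rightarrow> 'k::monoid_add \<Rightarrow> 'r::monoid_add) \<Rightarrow> bool" where
  "coeff_additive f \<longleftrightarrow> (\<forall>p a b. f p (a + b) = f p a + f p b)"

lemma coeff_additive_zero:
  fixes f :: "'p \<Rightarrow> 'k::monoid_add \<Rightarrow> 'r::ab_group_add"
  shows "coeff_additive f \<Longrightarrow> f p 0 = 0"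
  unfolding coeff_additive_def by (metis add.right_neutral add_cancel_right_right)

lemma pm_sum_superset:
  fixes f :: "'p \<Rightarrow> 'k::ab_group_add \<Rightarrow> 'r::ab_group_add"
  assumes "coeff_additive f" "finite S" "Poly_Mapping.keys x \<subseteq> S"
  shows "pm_sum f x = (\<Sum>p\<in>S. f p (Poly_Mapping.lookup x p))"
  unfolding pm_sum_def
  by (rule sum.mono_neutral_left) (use assms in \<open>auto simp: coeff_additive_zero in_keys_iff\<close>)

lemma pm_sum_zero [simp]: "pm_sum f 0 = 0"
  by (simp add: pm_sum_def)

lemma pm_sum_add:
  fixes f :: "'p \<Rightarrow> 'k::ab_group_add \<Rightarrow> 'r::ab_group_add"
  assumes f: "coeff_additive f"
  shows "pm_sum f (x + y) = pm_sum f x + pm_sum f y"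
proof -
  let ?S = "Poly_Mapping.keys x \<union> Poly_Mapping.keys y"
  have "pm_sum f (x + y) = (\<Sum>p\<in>?S. f p (Poly_Mapping.lookup (x + y) p))"
    by (rule pm_sum_superset[OF f]) (auto simp: keys_add)
  also have "\<dots> = (\<Sum>p\<in>?S. f p (Poly_Mapping.lookup x p)) + (\<Sum>p\<in>?S. f p (Poly_Mapping.lookup y p))"
    using f by (simp add: lookup_add coeff_additive_def sum.distrib)
  also have "\<dots> = pm_sum f x + pm_sum f y"
    by (simp add: pm_sum_superset[OF f, of ?S])
  finally show ?thesis .
qed

lemma pm_sum_diff:
  fixes f :: "'p \<Rightarrow> 'k::ab_group_add \<Rightarrow> 'r::ab_group_add"
  assumes "coeff_additive f"
  shows "pm_sum f (x - y) = pm_sum f x - pm_sum f y"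
  using pm_sum_add[OF assms, of "x - y" y] by (simp add: eq_diff_eq)

lemma pm_sum_sum:
  fixes f :: "'p \<Rightarrow> 'k::ab_group_add \<Rightarrow> 'r::ab_group_add"
  assumes "coeff_additive f"
  shows "pm_sum f (\<Sum>i\<in>I. x i) = (\<Sum>i\<in>I. pm_sum f (x i))"
  by (induction I rule: infinite_finite_induct) (simp_all add: pm_sum_add[OF assms])

lemma pm_sum_single:
  fixes f :: "'p \<Rightarrow> 'k::ab_group_add \<Rightarrow> 'r::ab_group_add"
  assumes "coeff_additive f"
  shows "pm_sum f (Poly_Mapping.single p c) = f p c"
  using assms by (cases "c = 0") (simp_all add: pm_sum_def coeff_additive_zero)

definition monomial_map :: "('p \<Rightarrow> 'm) \<Rightarrow> ('p \<Rightarrow>\<^sub>0 'k::ab_group_add) \<Rightarrow> 'm \<Rightarrow>\<^sub>0 'k" where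
  "monomial_map g = pm_sum (\<lambda>p. Poly_Mapping.single (g p))"

definition block_map :: "('a \<Rightarrow> 'v) \<Rightarrow> (('v, 'a) path \<Rightarrow> 'm) \<Rightarrow> 'v \<Rightarrow> 'v \<Rightarrow>
    (('v, 'a) path \<Rightarrow>\<^sub>0 'k::ab_group_add) \<Rightarrow> 'm \<Rightarrow>\<^sub>0 'k" where
  "block_map h g s e =
     pm_sum (\<lambda>p c. if fst p = s \<and> pend h p = e then Poly_Mapping.single (g p) c else 0)"

lemma coeff_additive_monomial_map: "coeff_additive (\<lambda>p. Poly_Mapping.single (g p))"
  by (simp add: coeff_additive_def single_add)

lemma coeff_additive_block_map:
  "coeff_additive (\<lambda>p c. if fst p = s \<and> pend h p = e then Poly_Mapping.single (g p) c else 0)"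
  by (auto simp: coeff_additive_def single_add)

lemma
  fixes x :: "'p \<Rightarrow>\<^sub>0 'k::ab_group_add"
  shows monomial_map_sum: "monomial_map g (\<Sum>i\<in>I. z i) = (\<Sum>i\<in>I. monomial_map g (z i))"
    and monomial_map_single: "monomial_map g (Poly_Mapping.single p c) = Poly_Mapping.single (g p) c"
  unfolding monomial_map_def
  by (simp_all add: coeff_additive_monomial_map pm_sum_sum pm_sum_single)

lemma
  fixes x y :: "('v, 'a) path \<Rightarrow>\<^sub>0 'k::ab_group_add"
  shows block_map_zero [simp]: "block_map h g s e 0 = 0"
    and block_map_add: "block_map h g s e (x + y) = block_map h g s e x + block_map h g s e y"
    and block_map_diff: "block_map h g s e (x - y) = block_map h g s e x - block_map h g s e y"
    and block_map_sum: "block_map h g s e (\<Sum>i\<in>I. z i) = (\<Sum>i\<in>I. block_map h g s e (z i))"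
    and block_map_single: "block_map h g s e (Poly_Mapping.single p c) =
      (if fst p = s \<and> pend h p = e then Poly_Mapping.single (g p) c else 0)"
  unfolding block_map_def
  by (simp_all add: coeff_additive_block_map pm_sum_add pm_sum_diff pm_sum_sum pm_sum_single)

lemma monomial_map_comp: "monomial_map g' (monomial_map g x) = monomial_map (g' \<circ> g) x"
  by (simp add: monomial_map_def[of g] pm_sum_def monomial_map_sum monomial_map_single)
    (simp add: monomial_map_def pm_sum_def)

lemma tau_bar_eq_monomial_map: "tau_bar SM = monomial_map (tau_exp SM)"
  by (simp add: fun_eq_iff tau_bar_def monomial_map_def pm_sum_def)

lemma contr_map_eq_monomial_map: "contr_map \<pi> Qs = monomial_map (contr_path \<pi> Qs)"
  by (simp add: fun_eq_iff contr_map_def monomial_map_def pm_sum_def)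

lemma monomial_map_eq_block_map:
  assumes "\<forall>p\<in>Poly_Mapping.keys x. fst p = s \<and> pend h p = e"
  shows "monomial_map g x = block_map h g s e x"
  using assms unfolding monomial_map_def block_map_def pm_sum_def by (intro sum.cong) auto

lemma monomial_map_eq_sum_block_map:
  assumes "finite A" "fst ` Poly_Mapping.keys x \<subseteq> A" "pend h ` Poly_Mapping.keys x \<subseteq> A"
  shows "monomial_map g x = (\<Sum>s\<in>A. \<Sum>e\<in>A. block_map h g s e x)"
proof -
  have delta: "(\<Sum>s\<in>A. \<Sum>e\<in>A. if fst p = s \<and> pend h p = e then Poly_Mapping.single (g p) c else 0)
      = Poly_Mapping.single (g p) c" if "p \<in> Poly_Mapping.keys x" for p c
  proof -
    have "fst p \<in> A" "pend h p \<in> A" using that assms by auto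
    moreover have "\<And>s e. (if fst p = s \<and> pend h p = e then Poly_Mapping.single (g p) c else 0) =
        (if pend h p = e then if fst p = s then Poly_Mapping.single (g p) c else 0 else 0)"
      by simp
    ultimately show ?thesis using assms(1) by (simp only:) (simp add: sum.delta')
  qed
  have "monomial_map g x = (\<Sum>p\<in>Poly_Mapping.keys x. \<Sum>s\<in>A. \<Sum>e\<in>A.
      if fst p = s \<and> pend h p = e then Poly_Mapping.single (g p) (Poly_Mapping.lookup x p) else 0)"
    unfolding monomial_map_def pm_sum_def by (intro sum.cong refl) (simp add: delta)
  also have "\<dots> = (\<Sum>s\<in>A. \<Sum>e\<in>A. \<Sum>p\<in>Poly_Mapping.keys x.
      if fst p = s \<and> pend h p = e then Poly_Mapping.single (g p) (Poly_Mapping.lookup x p) else 0)"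
    by (rule trans[OF sum.swap sum.cong[OF refl sum.swap]])
  finally show ?thesis
    by (simp add: block_map_def pm_sum_def)
qed

lemma sum_single_lookup: "(\<Sum>q\<in>Poly_Mapping.keys w. Poly_Mapping.single q (Poly_Mapping.lookup w q)) = w"
  by (rule poly_mapping_eqI) (simp add: lookup_sum lookup_single when_def in_keys_iff)

lemma single_one_mult_eq_0_iff:
  fixes w :: "'m::cancel_comm_monoid_add \<Rightarrow>\<^sub>0 'k::field"
  shows "Poly_Mapping.single m 1 * w = 0 \<longleftrightarrow> w = 0"
proof
  assume mw: "Poly_Mapping.single m 1 * w = 0"
  have "Poly_Mapping.single m 1 * w =
      Poly_Mapping.single m 1 * (\<Sum>q\<in>Poly_Mapping.keys w. Poly_Mapping.single q (Poly_Mapping.lookup w q))"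
    by (simp only: sum_single_lookup)
  also have "\<dots> = (\<Sum>q\<in>Poly_Mapping.keys w. Poly_Mapping.single (m + q) (Poly_Mapping.lookup w q))"
    by (simp add: sum_distrib_left mult_single)
  finally have "Poly_Mapping.lookup (Poly_Mapping.single m 1 * w) (m + k) = Poly_Mapping.lookup w k" for k
    by (simp add: lookup_sum lookup_single when_def sum.delta in_keys_iff)
  then show "w = 0"
    using mw by (intro poly_mapping_eqI) simp
qed simp

section \<open>Paths, blocks and corners\<close>

lemma fst_pcomp [simp]: "fst (pcomp p q) = fst q"
  by (simp add: pcomp_def)

lemma pend_pcomp: "pend h q = fst p \<Longrightarrow> pend h (pcomp p q) = pend h p"
  by (auto simp: pend_def pcomp_def)

lemma valid_path_trivial: "i \<in> V \<Longrightarrow> valid_path V E h t (i, [])"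
  by (simp add: valid_path_def)

lemma valid_path_pcomp:
  assumes p: "valid_path V E h t p" and q: "valid_path V E h t q" and pq: "pend h q = fst p"
  shows "valid_path V E h t (pcomp p q)"
proof -
  obtain u l where q_eq: "q = (u, l)" by (cases q)
  obtain w m where p_eq: "p = (w, m)" by (cases p)
  have l: "u \<in> V" "set l \<subseteq> E" "l \<noteq> [] \<Longrightarrow> t (hd l) = u"
    "\<And>i. Suc i < length l \<Longrightarrow> t (l ! Suc i) = h (l ! i)"
    using q by (auto simp: q_eq valid_path_def)
  have m: "set m \<subseteq> E" "m \<noteq> [] \<Longrightarrow> t (hd m) = w"
    "\<And>i. Suc i < length m \<Longrightarrow> t (m ! Suc i) = h (m ! i)"
    using p by (auto simp: p_eq valid_path_def)
  have w: "w = (if l = [] then u else h (last l))"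
    using pq by (auto simp: q_eq p_eq pend_def)
  have "t ((l @ m) ! Suc i) = h ((l @ m) ! i)" if i: "Suc i < length (l @ m)" for i
  proof -
    consider "Suc i < length l" | "Suc i = length l" | "length l \<le> i" by linarith
    then show ?thesis
    proof cases
      case 1
      then show ?thesis using l(4) by (simp add: nth_append)
    next
      case 2
      then have "l \<noteq> []" "m \<noteq> []" "i = length l - 1" using i by auto
      then show ?thesis using m(2) w by (simp add: nth_append last_conv_nth hd_conv_nth)
    next
      case 3
      then show ?thesis using m(3)[of "i - length l"] i by (simp add: nth_append Suc_diff_le)
    qed
  qed
  then show ?thesis
    using l m w by (cases "l = []") (auto simp: valid_path_def pcomp_def q_eq p_eq)
qed

lemma keys_pa_mult:
  "Poly_Mapping.keys (pa_mult h x y) \<subseteq>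
     {pcomp p q | p q. p \<in> Poly_Mapping.keys x \<and> q \<in> Poly_Mapping.keys y \<and> pend h q = fst p}"
  unfolding pa_mult_def
  by (rule order.trans[OF keys_sum]) (fastforce dest!: subsetD[OF keys_sum] split: if_splits)

lemma pathalg_single: "valid_path V E h t p \<Longrightarrow> Poly_Mapping.single p c \<in> pathalg V E h t K"
  by (simp add: pathalg_def)

definition path_additive :: "(('v, 'a) path \<Rightarrow> 'm::comm_monoid_add) \<Rightarrow> bool" where
  "path_additive g \<longleftrightarrow> (\<forall>p q. g (pcomp p q) = g q + g p) \<and> (\<forall>v. g (v, []) = 0)"

lemma block_map_pa_mult:
  fixes g :: "('v, 'a) path \<Rightarrow> 'm::comm_monoid_add" and x y :: "('v, 'a) path \<Rightarrow>\<^sub>0 'k::field"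
  assumes g: "path_additive g" and U: "finite U" "fst ` Poly_Mapping.keys x \<subseteq> U"
  shows "block_map h g s e (pa_mult h x y) = (\<Sum>k\<in>U. block_map h g k e x * block_map h g s k y)"
proof -
  let ?X = "\<lambda>p q. Poly_Mapping.single (g p + g q) (Poly_Mapping.lookup x p * Poly_Mapping.lookup y q)"
  let ?B = "\<lambda>k p q. if fst p = k \<and> pend h p = e \<and> fst q = s \<and> pend h q = k then ?X p q else 0"
  have g_pcomp: "g (pcomp p q) = g p + g q" for p q
    using g unfolding path_additive_def by (metis add.commute)
  have "block_map h g s e (pa_mult h x y) = (\<Sum>p\<in>Poly_Mapping.keys x. \<Sum>q\<in>Poly_Mapping.keys y.
      if pend h q = fst p \<and> fst q = s \<and> pend h p = e then ?X p q else 0)"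
    unfolding pa_mult_def block_map_sum
    by (intro sum.cong refl) (simp add: block_map_single pend_pcomp g_pcomp)
  also have "\<dots> = (\<Sum>p\<in>Poly_Mapping.keys x. \<Sum>q\<in>Poly_Mapping.keys y. \<Sum>k\<in>U. ?B k p q)"
  proof (intro sum.cong refl)
    fix p q assume "p \<in> Poly_Mapping.keys x"
    then have "fst p \<in> U" using U by auto
    have "(\<Sum>k\<in>U. ?B k p q) = (\<Sum>k\<in>U. if fst p = k then ?B (fst p) p q else 0)"
      by (intro sum.cong) auto
    also have "\<dots> = ?B (fst p) p q"
      using U(1) \<open>fst p \<in> U\<close> by (simp only: sum.delta' if_True)
    finally show "(if pend h q = fst p \<and> fst q = s \<and> pend h p = e then ?X p q else 0) =
        (\<Sum>k\<in>U. ?B k p q)"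
      by auto
  qed
  also have "\<dots> = (\<Sum>k\<in>U. \<Sum>p\<in>Poly_Mapping.keys x. \<Sum>q\<in>Poly_Mapping.keys y. ?B k p q)"
    by (rule trans[OF sum.cong[OF refl sum.swap] sum.swap])
  also have "\<dots> = (\<Sum>k\<in>U. block_map h g k e x * block_map h g s k y)"
    unfolding block_map_def pm_sum_def sum_product
    by (intro sum.cong refl) (auto simp: mult_single)
  finally show ?thesis .
qed

lemma block_map_trivial_path:
  assumes "path_additive g"
  shows "block_map h g s e (Poly_Mapping.single (v, []) 1) = (if s = v \<and> e = v then 1 else 0)"
  using assms by (auto simp: block_map_single pend_def path_additive_def)

definition sandwich :: "('a \<Rightarrow> 'v) \<Rightarrow> 'v \<Rightarrow> (('v, 'a) path \<Rightarrow>\<^sub>0 'k::field) \<Rightarrow> 'v \<Rightarrow>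
    ('v, 'a) path \<Rightarrow>\<^sub>0 'k" where
  "sandwich h e x s =
     pa_mult h (Poly_Mapping.single (e, []) 1) (pa_mult h x (Poly_Mapping.single (s, []) 1))"

lemma block_map_sandwich:
  fixes g :: "('v, 'a) path \<Rightarrow> 'm::comm_monoid_add"
  assumes g: "path_additive g"
  shows "block_map h g s e (sandwich h e x s) = block_map h g s e x"
proof -
  let ?x_s = "pa_mult h x (Poly_Mapping.single (s, []) 1)"
  have "block_map h g s k ?x_s = block_map h g s k x" for k
  proof -
    have "block_map h g s k ?x_s = (\<Sum>j\<in>insert s (fst ` Poly_Mapping.keys x).
        block_map h g j k x * block_map h g s j (Poly_Mapping.single (s, []) 1))"
      by (rule block_map_pa_mult[OF g]) auto
    then show ?thesis by (simp add: block_map_trivial_path[OF g] if_distrib cong: if_cong)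
  qed
  moreover have "block_map h g s e (sandwich h e x s) =
      (\<Sum>k\<in>{e}. block_map h g k e (Poly_Mapping.single (e, []) 1) * block_map h g s k ?x_s)"
    unfolding sandwich_def by (rule block_map_pa_mult[OF g]) auto
  ultimately show ?thesis by (simp add: block_map_trivial_path[OF g])
qed

lemma keys_sandwich:
  assumes "r \<in> Poly_Mapping.keys (sandwich h e x s)"
  shows "r \<in> Poly_Mapping.keys x \<and> fst r = s \<and> pend h r = e"
proof -
  obtain q where q: "q \<in> Poly_Mapping.keys (pa_mult h x (Poly_Mapping.single (s, []) 1))"
      "r = pcomp (e, []) q" "pend h q = e"
    using assms keys_pa_mult unfolding sandwich_def by fastforce
  then obtain p where "p \<in> Poly_Mapping.keys x" "q = pcomp p (s, [])" "fst p = s"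
    using keys_pa_mult by (fastforce simp: pend_def)
  with q show ?thesis by (cases p, cases q) (simp add: pcomp_def)
qed

lemma sandwich_in_ideal:
  assumes "y \<in> dimer_ideal V E h t F K" "s \<in> V" "e \<in> V"
  shows "sandwich h e y s \<in> dimer_ideal V E h t F K"
  unfolding sandwich_def
  using assms by (intro dimer_ideal.lmult dimer_ideal.rmult valid_path_trivial)

lemma sandwich_in_corner:
  "x \<in> pathalg V E h t K \<Longrightarrow> sandwich h i x i \<in> corner_elems V E h t K i"
  using keys_sandwich unfolding corner_elems_def pathalg_def by fastforce

lemma pa_mult_in_corner:
  assumes x: "x \<in> corner_elems V E h t K i" and y: "y \<in> corner_elems V E h t K i"
  shows "pa_mult h x y \<in> corner_elems V E h t K i"
proof -
  have "valid_path V E h t r \<and> fst r = i \<and> pend h r = i" if r: "r \<in> Poly_Mapping.keys (pa_mult h x y)" for r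
  proof -
    obtain p q where "p \<in> Poly_Mapping.keys x" "q \<in> Poly_Mapping.keys y" "pend h q = fst p"
      "r = pcomp p q"
      using r keys_pa_mult[of h x y] by blast
    then show ?thesis
      using x y valid_path_pcomp[of V E h t p q] pend_pcomp[of h q p]
      unfolding corner_elems_def pathalg_def by auto
  qed
  then show ?thesis unfolding corner_elems_def pathalg_def by auto
qed

lemma monomial_map_pa_mult_corner:
  fixes g :: "('v, 'a) path \<Rightarrow> 'm::comm_monoid_add"
  assumes g: "path_additive g"
    and x: "x \<in> corner_elems V E h t K i" and y: "y \<in> corner_elems V E h t K i"
  shows "monomial_map g (pa_mult h x y) = monomial_map g x * monomial_map g y"
proof -
  have corner: "monomial_map g z = block_map h g i i z" if "z \<in> corner_elems V E h t K i" for z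
    using that by (intro monomial_map_eq_block_map) (simp add: corner_elems_def)
  have "block_map h g i i (pa_mult h x y) = (\<Sum>k\<in>{i}. block_map h g k i x * block_map h g i k y)"
    by (rule block_map_pa_mult[OF g]) (use x in \<open>auto simp: corner_elems_def\<close>)
  then show ?thesis
    using corner[OF pa_mult_in_corner[OF x y]] corner[OF x] corner[OF y] by simp
qed

section \<open>Unit cycles and the relations\<close>

lemma contr_path_pcomp: "contr_path \<pi> Qs (pcomp p q) = pcomp (contr_path \<pi> Qs p) (contr_path \<pi> Qs q)"
  by (simp add: contr_path_def pcomp_def)

lemma path_additive_comp_contr_path:
  "path_additive g \<Longrightarrow> path_additive (g \<circ> contr_path \<pi> Qs)"
  by (simp add: path_additive_def contr_path_pcomp) (simp add: contr_path_def)

lemma tau_exp_pcomp: "tau_exp SM (pcomp p q) = tau_exp SM q + tau_exp SM p"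
  by (simp add: tau_exp_def pcomp_def)

lemma path_additive_tau_exp: "path_additive (tau_exp SM)"
  by (simp add: path_additive_def tau_exp_pcomp) (simp add: tau_exp_def)

lemma sum_single_eq: "(\<Sum>a\<in>A. Poly_Mapping.single k (f a)) = Poly_Mapping.single k (sum f A)"
  by (induction A rule: infinite_finite_induct) (simp_all add: single_add)

lemma tau_exp_unit_cycle:
  assumes dq: "dimer_quiver V E h t F" and SM: "\<forall>D\<in>SM. perfect_matching E F D"
    and uc: "unit_cycle F t r"
  shows "tau_exp SM r = (\<Sum>D\<in>SM. Poly_Mapping.single D 1)"
proof -
  from uc obtain f n where f: "f \<in> F" "snd r = rotate n f" by (auto simp: unit_cycle_def)
  with dq have "distinct f" and "finite E"
    by (auto simp: dimer_quiver_def)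
  have "finite SM"
    by (rule finite_subset[of _ "Pow E"]) (use SM \<open>finite E\<close> in \<open>auto simp: perfect_matching_def\<close>)
  have "tau_exp SM r = (\<Sum>a\<in>set f. \<Sum>D\<in>{D \<in> SM. a \<in> D}. Poly_Mapping.single D 1)"
    unfolding tau_exp_def f(2) using \<open>distinct f\<close> by (simp add: sum_list_distinct_conv_sum_set)
  also have "\<dots> = (\<Sum>D\<in>SM. \<Sum>a\<in>{a \<in> set f. a \<in> D}. Poly_Mapping.single D 1)"
    using \<open>finite SM\<close> by (simp add: sum.inter_filter sum.swap[of _ "set f"])
  also have "\<dots> = (\<Sum>D\<in>SM. Poly_Mapping.single D 1)"
  proof (intro sum.cong refl)
    fix D assume "D \<in> SM"
    then have "card {a \<in> set f. a \<in> D} = 1"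
      using SM f(1) by (auto simp: perfect_matching_def Int_def conj_commute)
    then show "(\<Sum>a\<in>{a \<in> set f. a \<in> D}. Poly_Mapping.single D 1) = Poly_Mapping.single D (1::nat)"
      by (simp only: sum_single_eq card_eq_sum[symmetric])
  qed
  finally show ?thesis .
qed

lemma rotate_cyclic_chain:
  assumes "\<forall>i<length f. t (f ! ((i + 1) mod length f)) = h (f ! i)" and "i < length f"
  shows "t (rotate n f ! ((i + 1) mod length f)) = h (rotate n f ! i)"
proof -
  let ?L = "length f"
  let ?j = "(n + i) mod ?L"
  have "0 < ?L" using assms(2) by (cases f) simp_all
  then have "?j < ?L" by simp
  have "rotate n f ! ((i + 1) mod ?L) = f ! ((?j + 1) mod ?L)"
    using \<open>0 < ?L\<close> by (simp add: nth_rotate mod_simps add.commute add.left_commute)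
  then have "t (rotate n f ! ((i + 1) mod ?L)) = h (f ! ?j)"
    using assms(1) \<open>?j < ?L\<close> by simp
  also have "f ! ?j = rotate n f ! i"
    using assms(2) by (simp add: nth_rotate add.commute)
  finally show ?thesis .
qed

lemma pend_unit_cycle:
  assumes dq: "dimer_quiver V E h t F" and uc: "unit_cycle F t (pcomp p (t a, [a]))"
    and p: "fst p = h a"
  shows "pend h p = t a"
proof -
  from uc obtain f n where f: "f \<in> F" "rotate n f = a # snd p"
    by (auto simp: unit_cycle_def pcomp_def)
  from dq f(1) have chain: "\<forall>i<length f. t (f ! ((i + 1) mod length f)) = h (f ! i)"
    by (auto simp: dimer_quiver_def)
  have len: "length f = Suc (length (snd p))"
    using arg_cong[OF f(2), of length] by simp
  have wrap: "length f - 1 < length f" "(length f - 1 + 1) mod length f = 0"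
    using len by simp_all
  have "t (rotate n f ! 0) = h (rotate n f ! (length f - 1))"
    using rotate_cyclic_chain[OF chain wrap(1), of n] unfolding wrap(2) .
  then have "t a = h (last (a # snd p))"
    unfolding f(2) using len by (simp add: last_conv_nth)
  then show ?thesis
    using p by (auto simp: pend_def)
qed

lemma block_map_tau_exp_ideal:
  assumes dq: "dimer_quiver V E h t F" and SM: "\<forall>D\<in>SM. perfect_matching E F D"
    and "z \<in> dimer_ideal V E h t F K"
  shows "block_map h (tau_exp SM) s e z = 0"
  using assms(3)
proof (induction arbitrary: s e rule: dimer_ideal.induct)
  case (gen p q)
  then obtain a where a: "fst p = h a" "fst q = h a"
    "unit_cycle F t (pcomp p (t a, [a]))" "unit_cycle F t (pcomp q (t a, [a]))"
    by (auto simp: dimer_rel_def)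
  have "tau_exp SM (pcomp p (t a, [a])) = tau_exp SM (pcomp q (t a, [a]))"
    using tau_exp_unit_cycle[OF dq SM a(3)] tau_exp_unit_cycle[OF dq SM a(4)] by simp
  then have "tau_exp SM p = tau_exp SM q"
    by (simp add: tau_exp_pcomp)
  then show ?case
    using pend_unit_cycle[OF dq a(3,1)] pend_unit_cycle[OF dq a(4,2)] a(1,2)
    by (simp add: block_map_diff block_map_single)
next
  case (lmult x u c)
  have "block_map h (tau_exp SM) s e (pa_mult h (Poly_Mapping.single u c) x) =
      (\<Sum>k\<in>{fst u}. block_map h (tau_exp SM) k e (Poly_Mapping.single u c) *
        block_map h (tau_exp SM) s k x)"
    by (rule block_map_pa_mult[OF path_additive_tau_exp]) auto
  then show ?case using lmult.IH by simp
next
  case (rmult x u c)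
  have "block_map h (tau_exp SM) s e (pa_mult h x (Poly_Mapping.single u c)) =
      (\<Sum>k\<in>fst ` Poly_Mapping.keys x. block_map h (tau_exp SM) k e x *
        block_map h (tau_exp SM) s k (Poly_Mapping.single u c))"
    by (rule block_map_pa_mult[OF path_additive_tau_exp]) auto
  then show ?case using rmult.IH by simp
qed (simp_all add: block_map_add)

lemma tau_bar_dimer_ideal:
  assumes "dimer_quiver V E h t F" "\<forall>D\<in>SM. perfect_matching E F D" "z \<in> dimer_ideal V E h t F K"
  shows "tau_bar SM z = 0"
proof -
  let ?A = "fst ` Poly_Mapping.keys z \<union> pend h ` Poly_Mapping.keys z"
  have "tau_bar SM z = (\<Sum>s\<in>?A. \<Sum>e\<in>?A. block_map h (tau_exp SM) s e z)"
    unfolding tau_bar_eq_monomial_map by (rule monomial_map_eq_sum_block_map) auto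
  then show ?thesis
    using block_map_tau_exp_ideal[OF assms] by simp
qed

section \<open>Spans over subsemirings\<close>

definition closed_subsemiring :: "'b::comm_semiring_1 set \<Rightarrow> bool" where
  "closed_subsemiring R \<longleftrightarrow> 0 \<in> R \<and> 1 \<in> R \<and> (\<forall>a\<in>R. \<forall>b\<in>R. a + b \<in> R \<and> a * b \<in> R)"

lemma closed_subsemiring_prod:
  "closed_subsemiring R \<Longrightarrow> (\<And>a. a \<in> A \<Longrightarrow> f a \<in> R) \<Longrightarrow> prod f A \<in> R"
  by (induction A rule: infinite_finite_induct) (auto simp: closed_subsemiring_def)

lemma k_subalg_one: "1 \<in> k_subalg G"
  using k_subalg.const[of 1 G] by simp

lemma closed_subsemiring_k_subalg: "closed_subsemiring (k_subalg G)"
  unfolding closed_subsemiring_def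
  using k_subalg.const[of 0 G] by (auto intro: k_subalg.add k_subalg.mult k_subalg_one)

definition span_over :: "'b::comm_semiring_1 set \<Rightarrow> 'j set \<Rightarrow> ('j \<Rightarrow> 'b) \<Rightarrow> 'b set" where
  "span_over R J \<beta> = {x. \<exists>c. (\<forall>j\<in>J. c j \<in> R) \<and> x = (\<Sum>j\<in>J. c j * \<beta> j)}"

lemma fg_module_iff_span_over:
  "fg_module R M \<longleftrightarrow> (\<exists>B. finite B \<and> B \<subseteq> M \<and> M \<subseteq> span_over R B id)"
  by (auto simp: fg_module_def span_over_def)

lemma span_over_mono: "R \<subseteq> R' \<Longrightarrow> span_over R J \<beta> \<subseteq> span_over R' J \<beta>"
  unfolding span_over_def by blast

lemma span_over_add:
  assumes R: "closed_subsemiring R" and "x \<in> span_over R J \<beta>" "y \<in> span_over R J \<beta>"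
  shows "x + y \<in> span_over R J \<beta>"
proof -
  obtain c d where "\<forall>j\<in>J. c j \<in> R" "x = (\<Sum>j\<in>J. c j * \<beta> j)"
    "\<forall>j\<in>J. d j \<in> R" "y = (\<Sum>j\<in>J. d j * \<beta> j)"
    using assms(2,3) unfolding span_over_def by blast
  then show ?thesis
    using R unfolding span_over_def closed_subsemiring_def
    by (intro CollectI exI[of _ "\<lambda>j. c j + d j"]) (simp add: sum.distrib distrib_right)
qed

lemma span_over_mult_left:
  assumes R: "closed_subsemiring R" and "r \<in> R" "x \<in> span_over R J \<beta>"
  shows "r * x \<in> span_over R J \<beta>"
proof -
  obtain c where "\<forall>j\<in>J. c j \<in> R" "x = (\<Sum>j\<in>J. c j * \<beta> j)"
    using assms(3) unfolding span_over_def by blast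
  then show ?thesis
    using R \<open>r \<in> R\<close> unfolding span_over_def closed_subsemiring_def
    by (intro CollectI exI[of _ "\<lambda>j. r * c j"]) (simp add: sum_distrib_left mult.assoc)
qed

lemma span_over_zero: "closed_subsemiring R \<Longrightarrow> 0 \<in> span_over R J \<beta>"
  unfolding span_over_def closed_subsemiring_def by (auto intro!: exI[of _ "\<lambda>_. 0"])

lemma span_over_sum:
  assumes R: "closed_subsemiring R" and "\<And>i. i \<in> I \<Longrightarrow> x i \<in> span_over R J \<beta>"
  shows "(\<Sum>i\<in>I. x i) \<in> span_over R J \<beta>"
  using assms(2)
  by (induction I rule: infinite_finite_induct) (auto intro: span_over_add[OF R] span_over_zero[OF R])

lemma span_over_mult_closed:
  assumes R: "closed_subsemiring R" and "\<And>b. b \<in> J \<Longrightarrow> y * b \<in> span_over R J id"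
    and "w \<in> span_over R J id"
  shows "y * w \<in> span_over R J id"
proof -
  obtain c where c: "\<forall>b\<in>J. c b \<in> R" "w = (\<Sum>b\<in>J. c b * b)"
    using assms(3) unfolding span_over_def by auto
  have "y * w = (\<Sum>b\<in>J. c b * (y * b))"
    unfolding c(2) by (simp add: sum_distrib_left mult.left_commute)
  also have "\<dots> \<in> span_over R J id"
    using c(1) assms(2) span_over_mult_left[OF R] by (intro span_over_sum[OF R]) blast
  finally show ?thesis .
qed

lemma span_over_generator:
  assumes R: "closed_subsemiring R" and "finite J" "j \<in> J"
  shows "\<beta> j \<in> span_over R J \<beta>"
  unfolding span_over_def
proof (intro CollectI exI[of _ "\<lambda>i. if i = j then 1 else 0"] conjI)
  show "\<forall>i\<in>J. (if i = j then 1 else 0) \<in> R"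
    using R by (simp add: closed_subsemiring_def)
  show "\<beta> j = (\<Sum>i\<in>J. (if i = j then 1 else 0) * \<beta> i)"
    using assms(2,3) by (simp add: if_distrib[of "\<lambda>c. c * _"] sum.delta cong: if_cong)
qed

definition choice_products :: "('i \<Rightarrow> 'j \<Rightarrow> 'b::comm_monoid_mult) \<Rightarrow> 'i set \<Rightarrow> 'j set \<Rightarrow> 'b set" where
  "choice_products \<beta> V B = (\<lambda>\<sigma>. \<Prod>k\<in>V. \<beta> k (\<sigma> k)) ` (V \<rightarrow>\<^sub>E B)"

lemma finite_choice_products: "finite V \<Longrightarrow> finite B \<Longrightarrow> finite (choice_products \<beta> V B)"
  by (simp add: choice_products_def finite_PiE)

lemma prod_in_span_over_choice_products:
  fixes \<beta> :: "'i \<Rightarrow> 'j \<Rightarrow> 'b::comm_semiring_1"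
  assumes R: "closed_subsemiring R" and V: "finite V" and B: "finite B"
    and f: "\<And>k. k \<in> V \<Longrightarrow> f k \<in> span_over R B (\<beta> k)"
  shows "prod f V \<in> span_over R (choice_products \<beta> V B) id"
proof -
  have "\<forall>k\<in>V. \<exists>c. (\<forall>b\<in>B. c b \<in> R) \<and> f k = (\<Sum>b\<in>B. c b * \<beta> k b)"
    using f by (simp add: span_over_def)
  then obtain C where C: "\<And>k. k \<in> V \<Longrightarrow> (\<forall>b\<in>B. C k b \<in> R) \<and> f k = (\<Sum>b\<in>B. C k b * \<beta> k b)"
    by metis
  have "prod f V = (\<Prod>k\<in>V. \<Sum>b\<in>B. C k b * \<beta> k b)"
    using C by (intro prod.cong) auto
  also have "\<dots> = (\<Sum>\<sigma>\<in>V \<rightarrow>\<^sub>E B. (\<Prod>k\<in>V. C k (\<sigma> k)) * (\<Prod>k\<in>V. \<beta> k (\<sigma> k)))"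
    unfolding prod_sum_PiE[OF V B] by (simp only: prod.distrib)
  also have "\<dots> \<in> span_over R (choice_products \<beta> V B) id"
  proof (intro span_over_sum[OF R] span_over_mult_left[OF R])
    fix \<sigma> assume \<sigma>: "\<sigma> \<in> V \<rightarrow>\<^sub>E B"
    show "(\<Prod>k\<in>V. C k (\<sigma> k)) \<in> R"
      using C \<sigma> by (intro closed_subsemiring_prod[OF R]) auto
    have "(\<Prod>k\<in>V. \<beta> k (\<sigma> k)) \<in> choice_products \<beta> V B"
      using \<sigma> by (simp add: choice_products_def)
    then show "(\<Prod>k\<in>V. \<beta> k (\<sigma> k)) \<in> span_over R (choice_products \<beta> V B) id"
      using span_over_generator[OF R finite_choice_products[OF V B], where \<beta> = id] by simp
  qed
  finally show ?thesis .
qed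

lemma mult_choice_product_in_span_over:
  fixes \<beta> :: "'i \<Rightarrow> 'j \<Rightarrow> 'b::comm_semiring_1"
  assumes R: "closed_subsemiring R" and V: "finite V" and B: "finite B"
    and T_mult: "\<And>i x y. i \<in> V \<Longrightarrow> x \<in> T i \<Longrightarrow> y \<in> T i \<Longrightarrow> x * y \<in> T i"
    and \<beta>_T: "\<And>i b. i \<in> V \<Longrightarrow> b \<in> B \<Longrightarrow> \<beta> i b \<in> T i"
    and T_span: "\<And>i. i \<in> V \<Longrightarrow> T i \<subseteq> span_over R B (\<beta> i)"
    and i: "i \<in> V" and y: "y \<in> T i" and b: "b \<in> choice_products \<beta> V B"
  shows "y * b \<in> span_over R (choice_products \<beta> V B) id"
proof -
  obtain \<sigma> where \<sigma>: "\<sigma> \<in> V \<rightarrow>\<^sub>E B" "b = (\<Prod>k\<in>V. \<beta> k (\<sigma> k))"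
    using b unfolding choice_products_def by blast
  let ?f = "(\<lambda>k. \<beta> k (\<sigma> k))(i := y * \<beta> i (\<sigma> i))"
  have "prod ?f (V - {i}) = (\<Prod>k\<in>V - {i}. \<beta> k (\<sigma> k))"
    by (rule prod.cong) auto
  then have "y * b = ?f i * prod ?f (V - {i})"
    using prod.remove[OF V i, of "\<lambda>k. \<beta> k (\<sigma> k)"] \<sigma>(2) by (simp add: mult.assoc)
  also have "\<dots> = prod ?f V"
    by (rule prod.remove[OF V i, symmetric])
  also have "\<dots> \<in> span_over R (choice_products \<beta> V B) id"
  proof (intro prod_in_span_over_choice_products[OF R V B])
    fix k assume "k \<in> V"
    then have "?f k \<in> T k"
      using \<sigma>(1) i y by (auto intro: T_mult \<beta>_T simp: PiE_iff)
    then show "?f k \<in> span_over R B (\<beta> k)"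
      using T_span \<open>k \<in> V\<close> by blast
  qed
  finally show ?thesis .
qed

lemma k_subalg_Union_subset_span_over:
  fixes T :: "'i \<Rightarrow> (('d \<Rightarrow>\<^sub>0 nat) \<Rightarrow>\<^sub>0 'k::field) set"
  assumes V: "finite V" and B: "finite B"
    and T_mult: "\<And>i x y. i \<in> V \<Longrightarrow> x \<in> T i \<Longrightarrow> y \<in> T i \<Longrightarrow> x * y \<in> T i"
    and T_one: "\<And>i. i \<in> V \<Longrightarrow> 1 \<in> T i"
    and \<beta>_T: "\<And>i b. i \<in> V \<Longrightarrow> b \<in> B \<Longrightarrow> \<beta> i b \<in> T i"
    and T_span: "\<And>i. i \<in> V \<Longrightarrow> T i \<subseteq> span_over (k_subalg X) B (\<beta> i)"
  shows "k_subalg (\<Union>i\<in>V. T i) \<subseteq> span_over (k_subalg X) (choice_products \<beta> V B) id"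
proof -
  let ?W = "span_over (k_subalg X) (choice_products \<beta> V B) id"
  note R = closed_subsemiring_k_subalg[of X]
  have "\<forall>w\<in>?W. s * w \<in> ?W" if "s \<in> k_subalg (\<Union>i\<in>V. T i)" for s
    using that
  proof (induction rule: k_subalg.induct)
    case (const c)
    then show ?case using span_over_mult_left[OF R k_subalg.const] by blast
  next
    case (gen y)
    then obtain i where "i \<in> V" "y \<in> T i" by blast
    then show ?case
      using mult_choice_product_in_span_over[where T = T and \<beta> = \<beta>, OF R V B T_mult \<beta>_T T_span]
      by (blast intro: span_over_mult_closed[OF R])
  next
    case (add x y)
    then show ?case by (simp add: distrib_right span_over_add[OF R])
  next
    case (mult x y)
    then show ?case by (simp add: mult.assoc)
  qed
  moreover have "1 \<in> ?W"
    using prod_in_span_over_choice_products[OF R V B, of "\<lambda>_. 1"] T_one T_span by auto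
  ultimately show ?thesis
    by fastforce
qed

lemma fg_module_k_subalg_Union:
  fixes T :: "'i \<Rightarrow> (('d \<Rightarrow>\<^sub>0 nat) \<Rightarrow>\<^sub>0 'k::field) set"
  assumes V: "finite V" and B: "finite B"
    and T_mult: "\<And>i x y. i \<in> V \<Longrightarrow> x \<in> T i \<Longrightarrow> y \<in> T i \<Longrightarrow> x * y \<in> T i"
    and T_one: "\<And>i. i \<in> V \<Longrightarrow> 1 \<in> T i"
    and \<beta>_T: "\<And>i b. i \<in> V \<Longrightarrow> b \<in> B \<Longrightarrow> \<beta> i b \<in> T i"
    and T_span: "\<And>i. i \<in> V \<Longrightarrow> T i \<subseteq> span_over (\<Inter>j\<in>V. T j) B (\<beta> i)"
  shows "fg_module (k_subalg (\<Inter>i\<in>V. T i)) (k_subalg (\<Union>i\<in>V. T i))"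
proof -
  have "T i \<subseteq> span_over (k_subalg (\<Inter>j\<in>V. T j)) B (\<beta> i)" if "i \<in> V" for i
    using T_span[OF that] span_over_mono[OF subsetI[OF k_subalg.gen]] by blast
  then have "k_subalg (\<Union>i\<in>V. T i) \<subseteq> span_over (k_subalg (\<Inter>i\<in>V. T i)) (choice_products \<beta> V B) id"
    by (intro k_subalg_Union_subset_span_over[OF V B T_mult T_one \<beta>_T])
  moreover have "choice_products \<beta> V B \<subseteq> k_subalg (\<Union>i\<in>V. T i)"
  proof
    fix x assume "x \<in> choice_products \<beta> V B"
    then obtain \<sigma> where \<sigma>: "\<sigma> \<in> V \<rightarrow>\<^sub>E B" "x = (\<Prod>k\<in>V. \<beta> k (\<sigma> k))"
      unfolding choice_products_def by blast
    have "\<beta> k (\<sigma> k) \<in> k_subalg (\<Union>i\<in>V. T i)" if "k \<in> V" for k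
      using that \<sigma>(1) \<beta>_T by (intro k_subalg.gen) (auto simp: PiE_iff)
    then show "x \<in> k_subalg (\<Union>i\<in>V. T i)"
      unfolding \<sigma>(2) by (intro closed_subsemiring_prod[OF closed_subsemiring_k_subalg])
  qed
  ultimately show ?thesis
    unfolding fg_module_iff_span_over using finite_choice_products[OF V B] by blast
qed

section \<open>Dimer algebras graded by monomials\<close>

locale dimer_grading =
  fixes V :: "'v set" and E :: "'a set" and h t :: "'a \<Rightarrow> 'v" and F :: "'a list set"
    and K :: "'k::field itself" and g :: "('v, 'a) path \<Rightarrow> 'm::cancel_comm_monoid_add"
  assumes dimer: "dimer_quiver V E h t F"
    and additive: "path_additive g"
    and block_map_ideal:
      "\<And>y s e. y \<in> dimer_ideal V E h t F K \<Longrightarrow> s \<in> V \<Longrightarrow> e \<in> V \<Longrightarrow> block_map h g s e y = 0"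
begin

definition corner_image :: "'v \<Rightarrow> ('m \<Rightarrow>\<^sub>0 'k) set" where
  "corner_image i = monomial_map g ` corner_elems V E h t K i"

lemma finite_vertices: "finite V"
  using dimer by (simp add: dimer_quiver_def)

lemma block_map_center_commute:
  assumes "c \<in> dimer_center V E h t F K" "x \<in> pathalg V E h t K" "s \<in> V" "e \<in> V"
  shows "block_map h g s e (pa_mult h c x) = block_map h g s e (pa_mult h x c)"
  using block_map_ideal[of "pa_mult h c x - pa_mult h x c" s e] assms
  by (simp add: dimer_center_def block_map_diff)

lemma block_map_center_pa_mult:
  assumes "c \<in> dimer_center V E h t F K"
  shows "block_map h g s e (pa_mult h c y) = (\<Sum>k\<in>V. block_map h g k e c * block_map h g s k y)"
  using assms finite_vertices
  by (intro block_map_pa_mult[OF additive]) (auto simp: dimer_center_def pathalg_def valid_path_def)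

lemma center_block_offdiag:
  assumes c: "c \<in> dimer_center V E h t F K" and "k \<in> V" "i \<in> V" "k \<noteq> i"
  shows "block_map h g k i c = 0"
proof -
  let ?e = "Poly_Mapping.single (k, []) (1::'k)"
  have "block_map h g k i (pa_mult h c ?e) = block_map h g k i (pa_mult h ?e c)"
    using assms by (intro block_map_center_commute pathalg_single valid_path_trivial)
  moreover have "block_map h g k i (pa_mult h c ?e) = block_map h g k i c"
    using \<open>k \<in> V\<close> finite_vertices
    by (simp add: block_map_center_pa_mult[OF c] block_map_trivial_path[OF additive] if_distrib
        cong: if_cong)
  moreover have "block_map h g k i (pa_mult h ?e c) =
      (\<Sum>m\<in>{k}. block_map h g m i ?e * block_map h g k m c)"
    by (rule block_map_pa_mult[OF additive]) auto
  ultimately show ?thesis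
    using \<open>k \<noteq> i\<close> by (simp add: block_map_trivial_path[OF additive])
qed

lemma block_map_center_pa_mult_diag:
  assumes c: "c \<in> dimer_center V E h t F K" and i: "i \<in> V"
  shows "block_map h g i i (pa_mult h c y) = block_map h g i i c * block_map h g i i y"
proof -
  have "block_map h g i i (pa_mult h c y) = (\<Sum>k\<in>V. block_map h g k i c * block_map h g i k y)"
    by (rule block_map_center_pa_mult[OF c])
  also have "\<dots> = (\<Sum>k\<in>V. if k = i then block_map h g i i c * block_map h g i i y else 0)"
    by (rule sum.cong) (auto simp: center_block_offdiag[OF c _ i])
  finally show ?thesis
    using finite_vertices i by simp
qed

lemma center_block_arrow:
  assumes c: "c \<in> dimer_center V E h t F K" and a: "a \<in> E"
  shows "block_map h g (h a) (h a) c = block_map h g (t a) (t a) c"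
proof -
  have ends: "h a \<in> V" "t a \<in> V" using dimer a by (auto simp: dimer_quiver_def)
  let ?a = "Poly_Mapping.single (t a, [a]) (1::'k)"
  let ?X = "Poly_Mapping.single (g (t a, [a])) (1::'k)"
  have "block_map h g (t a) (h a) (pa_mult h c ?a) = block_map h g (t a) (h a) (pa_mult h ?a c)"
    using ends a by (intro block_map_center_commute[OF c] pathalg_single) (auto simp: valid_path_def)
  moreover have "block_map h g (t a) (h a) (pa_mult h c ?a) = block_map h g (h a) (h a) c * ?X"
    using ends finite_vertices
    by (simp add: block_map_center_pa_mult[OF c] block_map_single pend_def if_distrib cong: if_cong)
  moreover have "block_map h g (t a) (h a) (pa_mult h ?a c) =
      (\<Sum>k\<in>{t a}. block_map h g k (h a) ?a * block_map h g (t a) k c)"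
    by (rule block_map_pa_mult[OF additive]) auto
  ultimately have "?X * (block_map h g (h a) (h a) c - block_map h g (t a) (t a) c) = 0"
    by (simp add: block_map_single pend_def algebra_simps)
  then show ?thesis
    by (simp add: single_one_mult_eq_0_iff)
qed

lemma center_block_constant:
  assumes c: "c \<in> dimer_center V E h t F K" and "u \<in> V" "w \<in> V"
  shows "block_map h g u u c = block_map h g w w c"
proof -
  have "(u, w) \<in> (und_edges E h t)\<^sup>*"
    using dimer assms by (auto simp: dimer_quiver_def)
  then show ?thesis
  proof (induction rule: rtrancl_induct)
    case (step y z)
    then show ?case
      using center_block_arrow[OF c] by (auto simp: und_edges_def)
  qed simp
qed

lemma block_map_in_corner_image:
  assumes "x \<in> pathalg V E h t K"
  shows "block_map h g i i x \<in> corner_image i"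
proof -
  have "\<forall>p\<in>Poly_Mapping.keys (sandwich h i x i). fst p = i \<and> pend h p = i"
    by (auto dest: keys_sandwich)
  then have "monomial_map g (sandwich h i x i) = block_map h g i i (sandwich h i x i)"
    by (rule monomial_map_eq_block_map)
  then have "block_map h g i i x = monomial_map g (sandwich h i x i)"
    by (simp add: block_map_sandwich[OF additive])
  then show ?thesis
    unfolding corner_image_def using sandwich_in_corner[OF assms] by blast
qed

lemma center_block_in_corner_images:
  assumes c: "c \<in> dimer_center V E h t F K" and i: "i \<in> V"
  shows "block_map h g i i c \<in> (\<Inter>j\<in>V. corner_image j)"
proof -
  have "block_map h g i i c \<in> corner_image j" if "j \<in> V" for j
    using center_block_constant[OF c i that] block_map_in_corner_image[of c j] c
    by (simp add: dimer_center_def)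
  then show ?thesis by blast
qed

lemma corner_image_mult:
  assumes "x \<in> corner_image i" "y \<in> corner_image i"
  shows "x * y \<in> corner_image i"
proof -
  obtain x' y' where x': "x' \<in> corner_elems V E h t K i" "x = monomial_map g x'"
    and y': "y' \<in> corner_elems V E h t K i" "y = monomial_map g y'"
    using assms unfolding corner_image_def by blast
  show ?thesis
    unfolding corner_image_def
  proof (rule image_eqI)
    show "x * y = monomial_map g (pa_mult h x' y')"
      using monomial_map_pa_mult_corner[OF additive x'(1) y'(1)] x'(2) y'(2) by simp
    show "pa_mult h x' y' \<in> corner_elems V E h t K i"
      by (rule pa_mult_in_corner[OF x'(1) y'(1)])
  qed
qed

lemma one_in_corner_image:
  assumes "i \<in> V"
  shows "1 \<in> corner_image i"
  unfolding corner_image_def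
proof (rule image_eqI)
  show "1 = monomial_map g (Poly_Mapping.single (i, []) 1)"
    using additive by (simp add: monomial_map_single path_additive_def)
  show "Poly_Mapping.single (i, []) 1 \<in> corner_elems V E h t K i"
    using assms by (simp add: corner_elems_def pathalg_def valid_path_def pend_def)
qed

lemma corner_image_span:
  assumes B: "\<forall>x\<in>pathalg V E h t K. \<exists>c. (\<forall>b\<in>B. c b \<in> dimer_center V E h t F K) \<and>
      x - (\<Sum>b\<in>B. pa_mult h (c b) b) \<in> dimer_ideal V E h t F K"
    and i: "i \<in> V"
  shows "corner_image i \<subseteq> span_over (\<Inter>j\<in>V. corner_image j) B (block_map h g i i)"
proof
  fix y assume "y \<in> corner_image i"
  then obtain x where x: "x \<in> corner_elems V E h t K i" "y = monomial_map g x"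
    unfolding corner_image_def by blast
  then have keys: "\<forall>p\<in>Poly_Mapping.keys x. fst p = i \<and> pend h p = i"
    by (simp add: corner_elems_def)
  obtain c where c: "\<forall>b\<in>B. c b \<in> dimer_center V E h t F K"
    "x - (\<Sum>b\<in>B. pa_mult h (c b) b) \<in> dimer_ideal V E h t F K"
    using B x(1) by (auto simp: corner_elems_def)
  have "y = block_map h g i i x"
    using monomial_map_eq_block_map[OF keys] x(2) by simp
  also have "\<dots> = (\<Sum>b\<in>B. block_map h g i i (pa_mult h (c b) b))"
    using block_map_ideal[OF c(2) i i] by (simp add: block_map_diff block_map_sum)
  also have "\<dots> = (\<Sum>b\<in>B. block_map h g i i (c b) * block_map h g i i b)"
    using c(1) by (intro sum.cong refl) (simp add: block_map_center_pa_mult_diag[OF _ i])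
  finally show "y \<in> span_over (\<Inter>j\<in>V. corner_image j) B (block_map h g i i)"
    unfolding span_over_def
    using c(1) center_block_in_corner_images[OF _ i]
    by (intro CollectI exI[of _ "\<lambda>b. block_map h g i i (c b)"]) simp
qed

end

lemma dimer_grading_contraction:
  assumes dq: "dimer_quiver V E h t F"
    and cc: "cyclic_contraction V E h t F V' E' h' t' F' \<pi> Qs K"
  shows "dimer_grading V E h t F K (tau_exp (simple_matchings V' E' h' t' F') \<circ> contr_path \<pi> Qs)"
proof
  let ?SM = "simple_matchings V' E' h' t' F'"
  let ?g = "tau_exp ?SM \<circ> contr_path \<pi> Qs"
  from cc have dq': "dimer_quiver V' E' h' t' F'"
    and ideal: "contr_map \<pi> Qs ` dimer_ideal V E h t F K \<subseteq> dimer_ideal V' E' h' t' F' K"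
    by (auto simp: cyclic_contraction_def)
  have SM: "\<forall>D\<in>?SM. perfect_matching E' F' D"
    by (simp add: simple_matchings_def simple_matching_def)
  show "dimer_quiver V E h t F" by (fact dq)
  show additive: "path_additive ?g"
    by (intro path_additive_comp_contr_path path_additive_tau_exp)
  fix y s e assume y: "y \<in> dimer_ideal V E h t F K" and "s \<in> V" "e \<in> V"
  then have z: "sandwich h e y s \<in> dimer_ideal V E h t F K"
    by (rule sandwich_in_ideal)
  have "block_map h ?g s e y = block_map h ?g s e (sandwich h e y s)"
    by (simp add: block_map_sandwich[OF additive])
  also have "\<dots> = monomial_map ?g (sandwich h e y s)"
    by (intro monomial_map_eq_block_map[symmetric] ballI) (simp add: keys_sandwich)
  also have "\<dots> = tau_bar ?SM (contr_map \<pi> Qs (sandwich h e y s))"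
    by (simp add: tau_bar_eq_monomial_map contr_map_eq_monomial_map monomial_map_comp)
  also have "\<dots> = 0"
    using tau_bar_dimer_ideal[OF dq' SM] z ideal by blast
  finally show "block_map h ?g s e y = 0" .
qed

theorem lemma3p16:
  fixes V :: "'v set" and E :: "'a set" and h t :: "'a \<Rightarrow> 'v" and F :: "'a list set"
    and V' :: "'w set" and E' :: "'a set" and h' t' :: "'a \<Rightarrow> 'w" and F' :: "'a list set"
    and \<pi> :: "'v \<Rightarrow> 'w" and Qs :: "'a set" and K :: "'k::field itself"
  assumes "alg_closed_field K"
    and "dimer_quiver V E h t F"
    and "nondegenerate E F"
    and "cyclic_contraction V E h t F V' E' h' t' F' \<pi> Qs K"
    and "fg_over_center V E h t F K"
  shows "fg_module (R_ring V E h t V' E' h' t' F' \<pi> Qs K) (S_ring V E h t V' E' h' t' F' \<pi> Qs K)"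
proof -
  let ?g = "tau_exp (simple_matchings V' E' h' t' F') \<circ> contr_path \<pi> Qs"
  interpret dimer_grading V E h t F K ?g
    using dimer_grading_contraction[OF assms(2,4)] .
  from assms(5) obtain B where B: "finite B" "B \<subseteq> pathalg V E h t K"
    "\<forall>x\<in>pathalg V E h t K. \<exists>c. (\<forall>b\<in>B. c b \<in> dimer_center V E h t F K) \<and>
        x - (\<Sum>b\<in>B. pa_mult h (c b) b) \<in> dimer_ideal V E h t F K"
    unfolding fg_over_center_def by blast
  have "taupsi_corner V E h t V' E' h' t' F' \<pi> Qs K = corner_image"
    by (simp add: fun_eq_iff taupsi_corner_def corner_image_def tau_bar_eq_monomial_map
        contr_map_eq_monomial_map monomial_map_comp)
  moreover have "fg_module (k_subalg (\<Inter>i\<in>V. corner_image i)) (k_subalg (\<Union>i\<in>V. corner_image i))"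
    using B(2) corner_image_span[OF B(3)]
    by (intro fg_module_k_subalg_Union[OF finite_vertices B(1)])
      (auto intro: corner_image_mult one_in_corner_image block_map_in_corner_image)
  ultimately show ?thesis
    by (simp add: R_ring_def S_ring_def)
qed

end
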